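(* For every list (any length and initial order) and every request sequence $\sigma$, in the full cost model, $$\mathrm{MTFO}(\sigma)+\mathrm{MTFE}(\sigma)\le 4\cdot\mathrm{OPT}(\sigma).$$
   Context: Static list update: a list of distinct items in some initial order; serving a request to the item at position $i$ (from the front) costs $i$ (full cost model); the accessed item may be moved closer to the front for free (free exchange); two adjacent items may be swapped at cost $1$ (paid exchange). $A(\sigma)$ is the total cost of algorithm $A$ and $\mathrm{OPT}(\sigma)$ the minimum cost of any offline algorithm from the same initial list. MTFO moves a requested item to the front on the 1st, 3rd, 5th, ... request to that item; MTFE on the 2nd, 4th, 6th, ... request; otherwise they leave it in place, and they make no paid exchanges. *)

theory Defs
  imports Main
begin

text \<open>Static list update, full cost model. Positions are 0-based internally
(pos), so serving the item at (1-based) position i costs index + 1.\<close>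

text \<open>0-based position of the first occurrence of x in xs (length xs if absent).\<close>
fun pos :: "'a list \<Rightarrow> 'a \<Rightarrow> nat" where
  "pos [] x = 0"
| "pos (y # ys) x = (if y = x then 0 else Suc (pos ys x))"

text \<open>Paid exchange: swap the adjacent items at positions i and i+1
(no effect on the list if out of range, but it is still paid for).\<close>
definition swap :: "nat \<Rightarrow> 'a list \<Rightarrow> 'a list" where
  "swap i xs = (if Suc i < length xs then xs[i := xs ! Suc i, Suc i := xs ! i] else xs)"

fun swaps :: "nat list \<Rightarrow> 'a list \<Rightarrow> 'a list" where
  "swaps [] xs = xs"
| "swaps (i # is) xs = swap i (swaps is xs)"

definition move_fwd :: "nat \<Rightarrow> 'a \<Rightarrow> 'a list \<Rightarrow> 'a list" where
  "move_fwd k x xs = (if x \<in> set xs \<and> k \<le> pos xs x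
     then (let ys = remove1 x xs in take k ys @ x # drop k ys) else xs)"

text \<open>An offline action for one request: a list of paid exchanges performed
before serving the request, and the target position of the free exchange
applied to the requested item after serving it.\<close>
type_synonym action = "nat list \<times> nat"

fun cost_off :: "'a list \<Rightarrow> 'a list \<Rightarrow> action list \<Rightarrow> nat" where
  "cost_off s (x # rs) ((sws, k) # as) =
     length sws + (pos (swaps sws s) x + 1)
     + cost_off (move_fwd k x (swaps sws s)) rs as"
| "cost_off s _ _ = 0"

definition OPT :: "'a list \<Rightarrow> 'a list \<Rightarrow> nat" where
  "OPT init rs = Inf {cost_off init rs as | as. length as = length rs}"

definition mtf :: "'a \<Rightarrow> 'a list \<Rightarrow> 'a list" where
  "mtf x xs = (if x \<in> set xs then x # remove1 x xs else xs)"

text \<open>Counter-based move-to-front: on the c-th request to x (c counting from 1)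
move x to the front iff (odd c) = p. p = True gives MTFO, p = False gives MTFE.
No paid exchanges.\<close>
fun run_parity :: "bool \<Rightarrow> ('a \<Rightarrow> nat) \<Rightarrow> 'a list \<Rightarrow> 'a list \<Rightarrow> nat" where
  "run_parity p c s [] = 0"
| "run_parity p c s (x # rs) =
     (let c' = c(x := Suc (c x));
          s' = (if odd (c' x) = p then mtf x s else s)
      in pos s x + 1 + run_parity p c' s' rs)"

definition MTFO :: "'a list \<Rightarrow> 'a list \<Rightarrow> nat" where
  "MTFO init rs = run_parity True (\<lambda>_. 0) init rs"

definition MTFE :: "'a list \<Rightarrow> 'a list \<Rightarrow> nat" where
  "MTFE init rs = run_parity False (\<lambda>_. 0) init rs"

end

theory Submission
  imports Defs
begin

text \<open>Amortized analysis with a potential over ordered pairs of distinct items.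
A pair on which the list of MTFO (or of MTFE) disagrees with the offline list
weighs 1 or 2: the number of further requests to the item that is first in the
offline list until the algorithm moves that item to the front. On a request to
x, exactly one of the two algorithms moves x to the front and the other advances
the phase of x; the resulting drop of the potential pays for twice the positions
of x in both lists, up to eight times its position in the offline list. A paid
exchange reorders a single pair, changing the potential by at most 6. As the
initial potential is 0, summing up gives 2 (MTFO + MTFE) \<le> 8 OPT.\<close>

lemma pos_less_length: "x \<in> set xs \<Longrightarrow> pos xs x < length xs"
  by (induction xs) auto

lemma nth_pos: "x \<in> set xs \<Longrightarrow> xs ! pos xs x = x"
  by (induction xs) auto

lemma pos_nth: "distinct xs \<Longrightarrow> i < length xs \<Longrightarrow> pos xs (xs ! i) = i"
proof (induction xs arbitrary: i)
  case (Cons y ys)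
  then show ?case by (cases i) (auto simp: nth_mem)
qed simp

lemma pos_eq_iff: "a \<in> set xs \<Longrightarrow> b \<in> set xs \<Longrightarrow> pos xs a = pos xs b \<longleftrightarrow> a = b"
  by (metis nth_pos)

lemma pos_take_Cons_drop:
  assumes "x \<notin> set ys" "a \<in> set ys \<or> a = x"
  shows "pos (take k ys @ x # drop k ys) a =
    (if a = x then min k (length ys) else if pos ys a < k then pos ys a else Suc (pos ys a))"
  using assms
proof (induction ys arbitrary: k)
  case (Cons y ys)
  then show ?case by (cases k) auto
qed simp

lemma pos_remove1:
  assumes "distinct xs" "x \<in> set xs" "a \<in> set xs" "a \<noteq> x"
  shows "pos (remove1 x xs) a = (if pos xs a < pos xs x then pos xs a else pos xs a - 1)"
  using assms
proof (induction xs)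
  case (Cons y ys)
  show ?case
  proof (cases "y = x \<or> a = y")
    case False
    then have "a \<in> set ys" "x \<in> set ys" using Cons.prems by auto
    with Cons.prems False show ?thesis
      using Cons.IH pos_eq_iff[of a ys x] by auto
  qed (use Cons.prems in auto)
qed simp

definition precedes :: "'a list \<Rightarrow> 'a \<Rightarrow> 'a \<Rightarrow> bool" where
  "precedes xs a b \<longleftrightarrow> pos xs a < pos xs b"

lemma not_precedes_iff:
  "a \<in> set xs \<Longrightarrow> b \<in> set xs \<Longrightarrow> a \<noteq> b \<Longrightarrow> \<not> precedes xs a b \<longleftrightarrow> precedes xs b a"
  unfolding precedes_def using pos_eq_iff[of a xs b] by auto

lemma card_pos_less:
  assumes "distinct xs" "x \<in> set xs"
  shows "card {a \<in> set xs. pos xs a < pos xs x} = pos xs x"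
proof -
  have "bij_betw (pos xs) {a \<in> set xs. pos xs a < pos xs x} {..<pos xs x}"
  proof (rule bij_betw_imageI)
    show "inj_on (pos xs) {a \<in> set xs. pos xs a < pos xs x}"
      by (rule inj_onI) (simp add: pos_eq_iff)
    have "j \<in> pos xs ` {a \<in> set xs. pos xs a < pos xs x}" if "j < pos xs x" for j
    proof -
      have "j < length xs" using that pos_less_length[OF assms(2)] by simp
      then show ?thesis
        using that pos_nth[OF assms(1)] by (intro image_eqI[of _ _ "xs ! j"]) auto
    qed
    then show "pos xs ` {a \<in> set xs. pos xs a < pos xs x} = {..<pos xs x}" by auto
  qed
  then show ?thesis by (simp add: bij_betw_same_card)
qed

lemma pos_eq_sum_precedes:
  assumes "distinct xs" "x \<in> set xs"
  shows "pos xs x = (\<Sum>a\<in>set xs - {x}. of_bool (precedes xs a x))"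
proof -
  have "(\<Sum>a\<in>set xs - {x}. of_bool (precedes xs a x) :: nat) = card ((set xs - {x}) \<inter> {a. precedes xs a x})"
    by (simp add: sum.If_cases)
  also have "(set xs - {x}) \<inter> {a. precedes xs a x} = {a \<in> set xs. pos xs a < pos xs x}"
    unfolding precedes_def by auto
  finally show ?thesis using card_pos_less[OF assms] by simp
qed

lemma insert_set_remove1: "x \<in> set xs \<Longrightarrow> insert x (set (remove1 x xs)) = set xs"
  by (induction xs) auto

lemma set_mtf: "set (mtf x xs) = set xs"
  unfolding mtf_def by (simp add: insert_set_remove1)

lemma distinct_mtf: "distinct xs \<Longrightarrow> distinct (mtf x xs)"
  unfolding mtf_def by auto

lemma set_move_fwd: "set (move_fwd k x xs) = set xs"
proof -
  have "set (take k ys @ x # drop k ys) = insert x (set ys)" for ys :: "'a list"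
    by (metis Un_insert_right append_take_drop_id list.set(2) set_append)
  then show ?thesis unfolding move_fwd_def by (simp add: Let_def insert_set_remove1)
qed

lemma distinct_move_fwd:
  assumes "distinct xs"
  shows "distinct (move_fwd k x xs)"
proof -
  have "distinct (take k ys @ x # drop k ys)" if "distinct ys" "x \<notin> set ys" for ys
  proof -
    have "distinct (take k ys @ drop k ys)" using that(1) by simp
    then show ?thesis
      using that(2) by (auto dest: in_set_takeD in_set_dropD simp del: append_take_drop_id)
  qed
  then show ?thesis using assms unfolding move_fwd_def by (auto simp: Let_def)
qed

lemma set_swaps: "set (swaps is xs) = set xs"
  by (induction "is") (auto simp: swap_def set_swap)

lemma distinct_swaps: "distinct xs \<Longrightarrow> distinct (swaps is xs)"
  by (induction "is") (auto simp: swap_def distinct_swap)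

lemma precedes_mtf_other:
  assumes "distinct xs" "x \<in> set xs" "a \<in> set xs" "b \<in> set xs" "a \<noteq> x" "b \<noteq> x"
  shows "precedes (mtf x xs) a b = precedes xs a b"
proof -
  have "pos xs a \<noteq> pos xs x" "pos xs b \<noteq> pos xs x" using assms pos_eq_iff by metis+
  with assms show ?thesis unfolding precedes_def mtf_def by (auto simp: pos_remove1)
qed

lemma precedes_mtf_front: "x \<in> set xs \<Longrightarrow> a \<noteq> x \<Longrightarrow> \<not> precedes (mtf x xs) a x"
  unfolding precedes_def mtf_def by auto

lemma precedes_move_fwd_other:
  assumes "distinct xs" "a \<in> set xs" "b \<in> set xs" "a \<noteq> x" "b \<noteq> x"
  shows "precedes (move_fwd k x xs) a b = precedes xs a b"
proof (cases "x \<in> set xs \<and> k \<le> pos xs x")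
  case True
  have "pos xs a \<noteq> pos xs x" "pos xs b \<noteq> pos xs x" using assms True pos_eq_iff by metis+
  with True assms show ?thesis unfolding precedes_def move_fwd_def
    by (auto simp: Let_def pos_take_Cons_drop pos_remove1)
next
  case False
  then show ?thesis by (auto simp: move_fwd_def)
qed

lemma precedes_move_fwd_imp:
  assumes "distinct xs" "a \<in> set xs" "a \<noteq> x" "precedes (move_fwd k x xs) a x"
  shows "precedes xs a x"
proof (cases "x \<in> set xs \<and> k \<le> pos xs x")
  case True
  have "a \<in> set (remove1 x xs)" using assms by (simp add: set_remove1_eq)
  then have "pos (remove1 x xs) a < length (remove1 x xs)" by (rule pos_less_length)
  then show ?thesis
    using True assms pos_eq_iff[of a xs x] unfolding precedes_def move_fwd_def
    by (auto simp: Let_def pos_take_Cons_drop pos_remove1 set_remove1_eq split: if_splits)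
next
  case False
  with assms show ?thesis by (simp add: move_fwd_def)
qed

lemma pos_swap:
  assumes "distinct xs" "Suc i < length xs" "z \<in> set xs"
  shows "pos (swap i xs) z = (if z = xs ! i then Suc i else if z = xs ! Suc i then i else pos xs z)"
proof -
  let ?ys = "xs[i := xs ! Suc i, Suc i := xs ! i]"
  have ys: "swap i xs = ?ys" using assms(2) by (simp add: swap_def)
  have "distinct ?ys" using assms(1,2) by (simp add: distinct_swap)
  then have pos_ys: "pos ?ys (?ys ! j) = j" if "j < length xs" for j
    using that pos_nth[of ?ys j] by simp
  consider "z = xs ! i" | "z = xs ! Suc i" | "z \<noteq> xs ! i" "z \<noteq> xs ! Suc i" by blast
  then show ?thesis
  proof cases
    case 3
    have "pos xs z < length xs" "xs ! pos xs z = z"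
      using assms(3) pos_less_length nth_pos by metis+
    moreover from this 3 have "pos xs z \<noteq> i" "pos xs z \<noteq> Suc i" by auto
    ultimately show ?thesis using 3 ys pos_ys[of "pos xs z"] by simp
  qed (use ys assms(1,2) pos_ys[of i] pos_ys[of "Suc i"] in \<open>auto simp: nth_eq_iff_index_eq\<close>)
qed

lemma precedes_swap:
  assumes "distinct xs" "a \<in> set xs" "b \<in> set xs"
    "{a, b} \<noteq> {xs ! i, xs ! Suc i}"
  shows "precedes (swap i xs) a b = precedes xs a b"
proof (cases "Suc i < length xs")
  case True
  have pos_i: "pos xs (xs ! i) = i" "pos xs (xs ! Suc i) = Suc i"
    using pos_nth[OF assms(1)] True by auto
  have "a \<noteq> xs ! i \<Longrightarrow> pos xs a \<noteq> i" "a \<noteq> xs ! Suc i \<Longrightarrow> pos xs a \<noteq> Suc i"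
    "b \<noteq> xs ! i \<Longrightarrow> pos xs b \<noteq> i" "b \<noteq> xs ! Suc i \<Longrightarrow> pos xs b \<noteq> Suc i"
    using assms(2,3) nth_pos by metis+
  moreover have "xs ! i \<noteq> xs ! Suc i" using assms(1) True by (simp add: nth_eq_iff_index_eq)
  ultimately show ?thesis using assms True pos_i
    unfolding precedes_def by (auto simp: pos_swap doubleton_eq_iff)
qed (simp add: swap_def)

text \<open>The weight of the ordered pair (a, b) for the algorithm that moves an
item to the front when its counter reaches parity p (MTFO: p = True). u and v
say whether a precedes b in the algorithm's and in the offline list, ca and cb
are the parities of the counters of a and b. On an inversion, the next request
to the item the offline list puts first moves it iff its parity differs from p.\<close>
definition inversion_weight :: "bool \<Rightarrow> bool \<Rightarrow> bool \<Rightarrow> bool \<Rightarrow> bool \<Rightarrow> nat" where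
  "inversion_weight p ca cb u v =
     (if u = v then 0 else if (if v then ca else cb) = p then 2 else 1)"

definition pair_weight :: "bool \<Rightarrow> bool \<Rightarrow> bool \<Rightarrow> bool \<Rightarrow> bool \<Rightarrow> nat" where
  "pair_weight ca cb u e v = inversion_weight True ca cb u v + inversion_weight False ca cb e v"

lemma pair_weight_le: "pair_weight ca cb u e v \<le> 3"
  unfolding pair_weight_def inversion_weight_def by auto

lemma pair_weight_eq_0: "pair_weight ca cb u u u = 0"
  unfolding pair_weight_def inversion_weight_def by simp

text \<open>A request to x, seen from a second item a; cx is the parity of the counter
of x before the request, so MTFO moves x to the front iff cx is False and MTFE
iff it is True. The free exchange of the offline algorithm only moves x forward,
whence v' \<longrightarrow> v.\<close>
lemma pair_weight_request:
  assumes "v' \<longrightarrow> v"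
  shows "2 * (of_bool u + of_bool e)
      + pair_weight ca (\<not> cx) (u \<and> cx) (e \<and> \<not> cx) v'
      + pair_weight (\<not> cx) ca (\<not> (u \<and> cx)) (\<not> (e \<and> \<not> cx)) (\<not> v')
    \<le> 8 * of_bool v + pair_weight ca cx u e v + pair_weight cx ca (\<not> u) (\<not> e) (\<not> v)"
  using assms unfolding pair_weight_def inversion_weight_def
  by (cases u; cases e; cases v; cases v'; cases ca; cases cx) simp_all

definition potential :: "'a set \<Rightarrow> ('a \<Rightarrow> nat) \<Rightarrow> 'a list \<Rightarrow> 'a list \<Rightarrow> 'a list \<Rightarrow> nat" where
  "potential S c sO sE sP = (\<Sum>a\<in>S. \<Sum>b\<in>S - {a}.
     pair_weight (odd (c a)) (odd (c b)) (precedes sO a b) (precedes sE a b) (precedes sP a b))"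

lemma potential_init: "potential S (\<lambda>_. 0) xs xs xs = 0"
  unfolding potential_def by (simp add: pair_weight_eq_0)

lemma sum_pairs_split:
  assumes "finite S" "x \<in> S"
  shows "(\<Sum>a\<in>S. \<Sum>b\<in>S - {a}. G a b) = (\<Sum>a\<in>S - {x}. G a x + G x a + (\<Sum>b\<in>S - {a} - {x}. G a b))"
proof -
  have "(\<Sum>a\<in>S. \<Sum>b\<in>S - {a}. G a b) = (\<Sum>b\<in>S - {x}. G x b) + (\<Sum>a\<in>S - {x}. \<Sum>b\<in>S - {a}. G a b)"
    using assms by (simp add: sum.remove)
  also have "(\<Sum>a\<in>S - {x}. \<Sum>b\<in>S - {a}. G a b) = (\<Sum>a\<in>S - {x}. G a x + (\<Sum>b\<in>S - {a} - {x}. G a b))"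
    using assms by (intro sum.cong) (auto simp: sum.remove)
  finally show ?thesis by (simp add: sum.distrib ac_simps)
qed

lemma sum_pairs_update_le:
  fixes G G' :: "'a \<Rightarrow> 'a \<Rightarrow> nat" and h k :: "'a \<Rightarrow> nat"
  assumes "finite S" "x \<in> S"
    and unchanged: "\<And>a b. a \<in> S - {x} \<Longrightarrow> b \<in> S - {a} - {x} \<Longrightarrow> G' a b = G a b"
    and changed: "\<And>a. a \<in> S - {x} \<Longrightarrow> G' a x + G' x a + h a \<le> k a + G a x + G x a"
  shows "(\<Sum>a\<in>S. \<Sum>b\<in>S - {a}. G' a b) + (\<Sum>a\<in>S - {x}. h a)
     \<le> (\<Sum>a\<in>S - {x}. k a) + (\<Sum>a\<in>S. \<Sum>b\<in>S - {a}. G a b)"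
proof -
  have "(\<Sum>a\<in>S. \<Sum>b\<in>S - {a}. G' a b) + (\<Sum>a\<in>S - {x}. h a)
      = (\<Sum>a\<in>S - {x}. G' a x + G' x a + h a + (\<Sum>b\<in>S - {a} - {x}. G a b))"
    using sum_pairs_split[OF assms(1,2), of G'] unchanged by (simp add: sum.distrib ac_simps)
  also have "\<dots> \<le> (\<Sum>a\<in>S - {x}. k a + G a x + G x a + (\<Sum>b\<in>S - {a} - {x}. G a b))"
    by (intro sum_mono add_right_mono changed)
  also have "\<dots> = (\<Sum>a\<in>S - {x}. k a) + (\<Sum>a\<in>S. \<Sum>b\<in>S - {a}. G a b)"
    using sum_pairs_split[OF assms(1,2), of G] by (simp add: sum.distrib ac_simps)
  finally show ?thesis .
qed

lemma sum_pairs_indicator_le_card: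
  assumes "finite S" "finite D"
  shows "(\<Sum>a\<in>S. \<Sum>b\<in>S - {a}. of_bool ((a, b) \<in> D) :: nat) \<le> card D"
proof -
  have "(\<Sum>a\<in>S. \<Sum>b\<in>S - {a}. of_bool ((a, b) \<in> D) :: nat)
      = (\<Sum>p\<in>Sigma S (\<lambda>a. S - {a}). of_bool (p \<in> D))"
    using assms by (subst sum.Sigma) auto
  also have "\<dots> = card (Sigma S (\<lambda>a. S - {a}) \<inter> D)"
    using assms by (simp add: sum_of_bool_eq Int_def)
  also have "\<dots> \<le> card D"
    using assms(2) by (intro card_mono) auto
  finally show ?thesis .
qed

lemma potential_swap:
  assumes "finite S" "distinct sP" "set sP = S"
  shows "potential S c sO sE (swap i sP) \<le> potential S c sO sE sP + 6"
proof -
  define D where "D = {(sP ! i, sP ! Suc i), (sP ! Suc i, sP ! i)}"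
  let ?w = "\<lambda>xs a b. pair_weight (odd (c a)) (odd (c b)) (precedes sO a b) (precedes sE a b) (precedes xs a b)"
  have "?w (swap i sP) a b \<le> ?w sP a b + 3 * of_bool ((a, b) \<in> D)" if "a \<in> S" "b \<in> S" for a b
  proof (cases "(a, b) \<in> D")
    case True
    then show ?thesis using pair_weight_le by (simp add: trans_le_add2)
  next
    case False
    then have "{a, b} \<noteq> {sP ! i, sP ! Suc i}" unfolding D_def by (auto simp: doubleton_eq_iff)
    then show ?thesis using precedes_swap[OF assms(2)] that assms(3) by simp
  qed
  then have "potential S c sO sE (swap i sP)
      \<le> (\<Sum>a\<in>S. \<Sum>b\<in>S - {a}. ?w sP a b + 3 * of_bool ((a, b) \<in> D))"
    unfolding potential_def by (intro sum_mono) auto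
  also have "\<dots> = potential S c sO sE sP + 3 * (\<Sum>a\<in>S. \<Sum>b\<in>S - {a}. of_bool ((a, b) \<in> D))"
    unfolding potential_def by (simp add: sum.distrib sum_distrib_left)
  also have "\<dots> \<le> potential S c sO sE sP + 3 * card D"
    using sum_pairs_indicator_le_card[OF assms(1), of D] by (simp add: D_def)
  also have "card D \<le> 2" unfolding D_def by (rule card_insert_le_m1) simp_all
  finally show ?thesis by linarith
qed

lemma potential_swaps:
  assumes "finite S" "distinct sP" "set sP = S"
  shows "potential S c sO sE (swaps sws sP) \<le> potential S c sO sE sP + 6 * length sws"
proof (induction sws)
  case (Cons i sws)
  have "potential S c sO sE (swap i (swaps sws sP)) \<le> potential S c sO sE (swaps sws sP) + 6"
    using potential_swap assms distinct_swaps set_swaps by metis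
  then show ?case using Cons.IH by simp
qed simp

lemma potential_request:
  assumes "finite S" "x \<in> S"
    and dO: "distinct sO" and dE: "distinct sE" and dP: "distinct sP"
    and sO: "set sO = S" and sE: "set sE = S" and sP: "set sP = S"
  shows "2 * (pos sO x + pos sE x)
      + potential S (c(x := Suc (c x))) (if odd (c x) then sO else mtf x sO)
          (if odd (c x) then mtf x sE else sE) (move_fwd k x sP)
    \<le> 8 * pos sP x + potential S c sO sE sP"
proof -
  define c' where "c' = c(x := Suc (c x))"
  define sO' where "sO' = (if odd (c x) then sO else mtf x sO)"
  define sE' where "sE' = (if odd (c x) then mtf x sE else sE)"
  define sP' where "sP' = move_fwd k x sP"
  have sO': "set sO' = S" and sE': "set sE' = S" and sP': "set sP' = S"
    unfolding sO'_def sE'_def sP'_def using sO sE sP by (simp_all add: set_mtf set_move_fwd)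
  define w where "w a b = pair_weight (odd (c a)) (odd (c b))
    (precedes sO a b) (precedes sE a b) (precedes sP a b)" for a b
  define w' where "w' a b = pair_weight (odd (c' a)) (odd (c' b))
    (precedes sO' a b) (precedes sE' a b) (precedes sP' a b)" for a b
  have "w' a b = w a b" if "a \<in> S - {x}" "b \<in> S - {a} - {x}" for a b
  proof -
    have "precedes sO' a b = precedes sO a b" "precedes sE' a b = precedes sE a b"
      unfolding sO'_def sE'_def
      using precedes_mtf_other[OF dO] precedes_mtf_other[OF dE] that sO sE \<open>x \<in> S\<close> by auto
    moreover have "precedes sP' a b = precedes sP a b"
      unfolding sP'_def using precedes_move_fwd_other[OF dP] that sP by auto
    moreover have "c' a = c a" "c' b = c b" unfolding c'_def using that by auto
    ultimately show ?thesis unfolding w_def w'_def by simp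
  qed
  moreover have "w' a x + w' x a + 2 * (of_bool (precedes sO a x) + of_bool (precedes sE a x))
      \<le> 8 * of_bool (precedes sP a x) + w a x + w x a" if a: "a \<in> S - {x}" for a
  proof -
    have flip: "precedes xs x a \<longleftrightarrow> \<not> precedes xs a x" if "set xs = S" for xs :: "'a list"
      using not_precedes_iff[of a xs x] that a \<open>x \<in> S\<close> by auto
    have "precedes sO' a x \<longleftrightarrow> odd (c x) \<and> precedes sO a x"
      "precedes sE' a x \<longleftrightarrow> \<not> odd (c x) \<and> precedes sE a x"
      unfolding sO'_def sE'_def
      using precedes_mtf_front[of x sO a] precedes_mtf_front[of x sE a] a sO sE \<open>x \<in> S\<close> by auto
    moreover have "precedes sP' a x \<longrightarrow> precedes sP a x"
      unfolding sP'_def using precedes_move_fwd_imp[OF dP] a sP by blast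
    moreover have "odd (c' a) = odd (c a)" "odd (c' x) = (\<not> odd (c x))"
      unfolding c'_def using a by auto
    ultimately show ?thesis
      unfolding w_def w'_def flip[OF sO] flip[OF sE] flip[OF sP] flip[OF sO'] flip[OF sE'] flip[OF sP']
      using pair_weight_request[of "precedes sP' a x" "precedes sP a x" "precedes sO a x"
          "precedes sE a x" "odd (c a)" "odd (c x)"]
      by (simp add: ac_simps)
  qed
  ultimately have "(\<Sum>a\<in>S. \<Sum>b\<in>S - {a}. w' a b)
      + (\<Sum>a\<in>S - {x}. 2 * (of_bool (precedes sO a x) + of_bool (precedes sE a x)))
    \<le> (\<Sum>a\<in>S - {x}. 8 * of_bool (precedes sP a x)) + (\<Sum>a\<in>S. \<Sum>b\<in>S - {a}. w a b)"
    by (rule sum_pairs_update_le[OF assms(1,2)])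
  moreover have "(\<Sum>a\<in>S - {x}. 2 * (of_bool (precedes sO a x) + of_bool (precedes sE a x)))
      = 2 * (pos sO x + pos sE x)"
    using pos_eq_sum_precedes[OF dO] pos_eq_sum_precedes[OF dE] sO sE \<open>x \<in> S\<close>
    by (simp add: sum.distrib sum_distrib_left)
  moreover have "(\<Sum>a\<in>S - {x}. 8 * of_bool (precedes sP a x)) = 8 * pos sP x"
    using pos_eq_sum_precedes[OF dP] sP \<open>x \<in> S\<close> by (simp add: sum_distrib_left)
  ultimately show ?thesis
    unfolding potential_def w_def w'_def c'_def sO'_def sE'_def sP'_def by linarith
qed

lemma run_parity_amortized:
  assumes "finite S" "distinct sO" "distinct sE" "distinct sP"
    and "set sO = S" "set sE = S" "set sP = S"
    and "set rs \<subseteq> S" "length as = length rs"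
  shows "2 * (run_parity True c sO rs + run_parity False c sE rs)
    \<le> 8 * cost_off sP rs as + potential S c sO sE sP"
  using assms
proof (induction rs arbitrary: c sO sE sP "as")
  case (Cons x rs)
  obtain sws k as' where as: "as = (sws, k) # as'" and length_as': "length as' = length rs"
    using Cons.prems(9) by (cases "as") auto
  define sP1 where "sP1 = swaps sws sP"
  define c' where "c' = c(x := Suc (c x))"
  define sO' where "sO' = (if odd (c x) then sO else mtf x sO)"
  define sE' where "sE' = (if odd (c x) then mtf x sE else sE)"
  define sP' where "sP' = move_fwd k x sP1"
  have sP1: "distinct sP1" "set sP1 = S"
    unfolding sP1_def using Cons.prems(4,7) by (simp_all add: distinct_swaps set_swaps)
  have "2 * (run_parity True c' sO' rs + run_parity False c' sE' rs)
      \<le> 8 * cost_off sP' rs as' + potential S c' sO' sE' sP'"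
    using Cons.prems sP1 length_as' unfolding sO'_def sE'_def sP'_def
    by (intro Cons.IH) (auto simp: set_mtf distinct_mtf set_move_fwd distinct_move_fwd)
  moreover have "2 * (pos sO x + pos sE x) + potential S c' sO' sE' sP'
      \<le> 8 * pos sP1 x + potential S c sO sE sP1"
    unfolding c'_def sO'_def sE'_def sP'_def
    using Cons.prems sP1 by (intro potential_request) auto
  moreover have "potential S c sO sE sP1 \<le> potential S c sO sE sP + 6 * length sws"
    unfolding sP1_def using Cons.prems(1,4,7) by (rule potential_swaps)
  moreover have "run_parity True c sO (x # rs) = pos sO x + 1 + run_parity True c' sO' rs"
    "run_parity False c sE (x # rs) = pos sE x + 1 + run_parity False c' sE' rs"
    unfolding c'_def sO'_def sE'_def by (simp_all add: Let_def)
  moreover have "cost_off sP (x # rs) as = length sws + (pos sP1 x + 1) + cost_off sP' rs as'"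
    unfolding as sP1_def sP'_def by simp
  ultimately show ?case by (simp add: distrib_left)
qed simp

lemma OPT_attained:
  obtains "as" where "length as = length rs" "OPT init rs = cost_off init rs as"
proof -
  let ?costs = "{cost_off init rs as | as. length as = length rs}"
  have "cost_off init rs (replicate (length rs) ([], 0)) \<in> ?costs" by auto
  then have "Inf ?costs \<in> ?costs" by (intro Inf_nat_def1) blast
  then show thesis using that unfolding OPT_def by auto
qed

theorem lemma10:
  fixes init rs :: "'a list"
  assumes "distinct init" and "set rs \<subseteq> set init"
  shows "MTFO init rs + MTFE init rs \<le> 4 * OPT init rs"
proof -
  obtain "as" where "length as = length rs" and opt: "OPT init rs = cost_off init rs as"
    by (rule OPT_attained)
  then have "2 * (MTFO init rs + MTFE init rs)
      \<le> 8 * cost_off init rs as + potential (set init) (\<lambda>_. 0) init init init"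
    unfolding MTFO_def MTFE_def using assms by (intro run_parity_amortized) auto
  then show ?thesis unfolding opt potential_init by simp
qed

end
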